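(* Let $p$ be a prime, let $\Gamma\subsetneq\mathbb{F}_p^*$ be a proper multiplicative subgroup, and let $A,B\subseteq\mathbb{F}_p$ be two sets with $A+B\subseteq\Gamma\sqcup\{0\}$. Then $|A||B|<4p$. *)

theory Defs
  imports "HOL-Computational_Algebra.Primes" "HOL-Library.Cardinality"
begin

definition mult_subgroup :: "'a::field set \<Rightarrow> bool" where
  "mult_subgroup G \<longleftrightarrow> G \<subseteq> - {0} \<and> 1 \<in> G \<and>
     (\<forall>x\<in>G. \<forall>y\<in>G. x * y \<in> G) \<and> (\<forall>x\<in>G. inverse x \<in> G)"

end

theory Submission
  imports Defs "HOL-Algebra.Algebraic_Closure_Type" "HOL-Library.Real_Mod" "HOL-Analysis.Convex"
begin

(* Pick a multiplicative character \<chi> of the finite field F that is trivial on \<Gamma> but not on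
   all of F - {0}; it exists because F - {0} is cyclic and \<Gamma> is a proper subgroup.  Since
   \<chi>(a + b) = 1 whenever a + b \<noteq> 0, the character sums f(x) = \<Sum>b\<in>B. \<chi>(x + b) add up over A
   to |A||B| - Z with Z = |{a \<in> A. -a \<in> B}| \<le> min |A| |B|.  Orthogonality of shifted
   characters gives \<Sum>x. |f(x)|^2 = |B|(|F| - |B|), so by Cauchy-Schwarz
   (|A||B| - Z)^2 \<le> |A||B||F|, which together with Z^2 \<le> |A||B| forces |A||B| < 4|F|. *)

lemma power_card_eq_1_if_mult_closed:
  fixes G :: "'a::field set"
  assumes "finite G" "G \<subseteq> - {0}" "\<forall>x\<in>G. \<forall>y\<in>G. x * y \<in> G" "x \<in> G"
  shows "x ^ card G = 1"
proof -
  have inj: "inj_on ((*) x) G"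
    using assms(2,4) by (auto simp: inj_on_def)
  have "(*) x ` G \<subseteq> G"
    using assms(3,4) by auto
  then have "(*) x ` G = G"
    using card_subset_eq[OF assms(1)] card_image[OF inj] by blast
  then have "prod id G = prod ((*) x) G"
    using prod.reindex[OF inj] by simp
  also have "\<dots> = x ^ card G * prod id G"
    by (simp add: prod.distrib)
  finally have "prod id G * 1 = prod id G * x ^ card G"
    by (simp add: mult.commute)
  moreover have "prod id G \<noteq> 0"
    using assms(1,2) by (auto simp: prod_zero_iff)
  ultimately show ?thesis
    by simp
qed

lemma power_mod_eq_if_power_eq_1:
  fixes z :: "'a::monoid_mult"
  assumes "z ^ n = 1"
  shows "z ^ (i mod n) = z ^ i"
proof -
  have "z ^ i = (z ^ n) ^ (i div n) * z ^ (i mod n)"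
    by (metis div_mult_mod_eq mult.commute power_add power_mult)
  with assms show ?thesis
    by simp
qed

locale nontrivial_mult_char =
  fixes \<chi> :: "'a::{field,finite} \<Rightarrow> complex"
  assumes chi_0 [simp]: "\<chi> 0 = 0"
    and norm_chi: "x \<noteq> 0 \<Longrightarrow> norm (\<chi> x) = 1"
    and chi_mult: "\<chi> (x * y) = \<chi> x * \<chi> y"
    and nontrivial: "\<exists>x. x \<noteq> 0 \<and> \<chi> x \<noteq> 1"
begin

lemma chi_mult_cnj: "x \<noteq> 0 \<Longrightarrow> \<chi> x * cnj (\<chi> x) = 1"
  using norm_chi by (simp flip: complex_norm_square)

lemma chi_1 [simp]: "\<chi> 1 = 1"
proof -
  have "\<chi> 1 * cnj (\<chi> 1) = \<chi> 1 * \<chi> 1 * cnj (\<chi> 1)"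
    using chi_mult[of 1 1] by simp
  then show ?thesis
    using chi_mult_cnj[of 1] by (simp add: mult.assoc)
qed

lemma chi_inverse: "\<chi> (inverse x) = cnj (\<chi> x)"
proof (cases "x = 0")
  case False
  then have "\<chi> x * \<chi> (inverse x) = \<chi> x * cnj (\<chi> x)"
    by (simp add: chi_mult_cnj flip: chi_mult)
  moreover have "\<chi> x \<noteq> 0"
    using False norm_chi by fastforce
  ultimately show ?thesis
    by simp
qed simp

lemma sum_chi: "(\<Sum>x\<in>UNIV. \<chi> x) = 0"
proof -
  obtain g where "g \<noteq> 0" and "\<chi> g \<noteq> 1"
    using nontrivial by blast
  have "(\<Sum>x\<in>UNIV. \<chi> x) = (\<Sum>x\<in>UNIV. \<chi> (g * x))"
    by (rule sum.reindex_bij_witness[of _ "\<lambda>x. g * x" "\<lambda>y. inverse g * y"])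
      (use \<open>g \<noteq> 0\<close> in \<open>simp_all add: mult.assoc [symmetric]\<close>)
  also have "\<dots> = \<chi> g * (\<Sum>x\<in>UNIV. \<chi> x)"
    by (simp add: chi_mult sum_distrib_left)
  finally show ?thesis
    using \<open>\<chi> g \<noteq> 1\<close> by (metis mult_cancel_right2)
qed

lemma sum_chi_shift_mult_cnj:
  "(\<Sum>x\<in>UNIV. \<chi> (x + b) * cnj (\<chi> (x + c))) = (if b = c then of_nat CARD('a) else 0) - 1"
proof -
  define \<phi> where "\<phi> x = (if b = c then 1 else \<chi> (1 + (b - c) * inverse (x + c)))" for x
  have pointwise: "\<chi> (x + b) * cnj (\<chi> (x + c)) = \<phi> x - (if x = - c then 1 else 0)" for x
  proof (cases "x = - c")
    case False
    then have "x + c \<noteq> 0"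
      by (simp add: add_eq_0_iff2)
    then have "(x + b) * inverse (x + c) = 1 + (b - c) * inverse (x + c)"
      by (simp add: field_simps)
    then show ?thesis
      using False \<open>x + c \<noteq> 0\<close> by (auto simp: \<phi>_def chi_mult_cnj simp flip: chi_inverse chi_mult)
  qed (simp add: \<phi>_def)
  have "(\<Sum>x\<in>UNIV. \<phi> x) = (if b = c then of_nat CARD('a) else 0)"
  proof (cases "b = c")
    case False
    \<comment> \<open>x \<mapsto> 1 + (b - c) / (x + c) is a bijection of the field, since inverse 0 = 0\<close>
    have "(\<Sum>x\<in>UNIV. \<chi> (1 + (b - c) * inverse (x + c))) = (\<Sum>y\<in>UNIV. \<chi> y)"
      by (rule sum.reindex_bij_witness[of _ "\<lambda>y. (b - c) * inverse (y - 1) - c"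
            "\<lambda>x. 1 + (b - c) * inverse (x + c)"])
          (use False in \<open>simp_all add: mult.assoc [symmetric]\<close>)
    then show ?thesis
      using False by (simp add: \<phi>_def sum_chi)
  qed (simp add: \<phi>_def)
  then show ?thesis
    by (simp add: pointwise sum_subtractf)
qed

lemma sum_norm_chi_sum_squared:
  "(\<Sum>x\<in>UNIV. (norm (\<Sum>b\<in>B. \<chi> (x + b)))\<^sup>2) = real (card B) * (real CARD('a) - real (card B))"
proof -
  have "complex_of_real (\<Sum>x\<in>UNIV. (norm (\<Sum>b\<in>B. \<chi> (x + b)))\<^sup>2)
      = (\<Sum>x\<in>UNIV. \<Sum>b\<in>B. \<Sum>c\<in>B. \<chi> (x + b) * cnj (\<chi> (x + c)))"
    by (simp only: of_real_sum complex_norm_square cnj_sum sum_product)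
  also have "\<dots> = (\<Sum>b\<in>B. \<Sum>c\<in>B. \<Sum>x\<in>UNIV. \<chi> (x + b) * cnj (\<chi> (x + c)))"
    by (subst sum.swap) (rule sum.cong[OF refl], rule sum.swap)
  also have "\<dots> = (\<Sum>b\<in>B. \<Sum>c\<in>B. (if b = c then of_nat CARD('a) else 0) - 1)"
    by (simp only: sum_chi_shift_mult_cnj)
  also have "\<dots> = complex_of_real (real (card B) * (real CARD('a) - real (card B)))"
    by (simp add: sum_subtractf)
  finally show ?thesis
    by (simp only: of_real_eq_iff)
qed

lemma sumset_in_kernel_card_bound:
  assumes "\<And>a b. a \<in> A \<Longrightarrow> b \<in> B \<Longrightarrow> a + b \<noteq> 0 \<Longrightarrow> \<chi> (a + b) = 1"
  shows "(real (card A * card B) - real (card {a\<in>A. - a \<in> B}))\<^sup>2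
           \<le> real (card A * card B) * real CARD('a)"
proof -
  define f where "f x = (\<Sum>b\<in>B. \<chi> (x + b))" for x
  have f_on_A: "f a = of_nat (card B) - (if - a \<in> B then 1 else 0)" if "a \<in> A" for a
  proof -
    have "\<chi> (a + b) = 1 - (if b = - a then 1 else 0)" if "b \<in> B" for b
      using assms[OF \<open>a \<in> A\<close> that] by (auto simp: add_eq_0_iff)
    then have "f a = (\<Sum>b\<in>B. 1 - (if b = - a then 1 else 0))"
      unfolding f_def by simp
    then show ?thesis
      by (simp add: sum_subtractf)
  qed
  have "(\<Sum>a\<in>A. f a) = of_real (real (card A * card B) - real (card {a\<in>A. - a \<in> B}))"
    by (simp add: f_on_A sum_subtractf sum.If_cases Int_def)
  then have "(real (card A * card B) - real (card {a\<in>A. - a \<in> B}))\<^sup>2 = (norm (\<Sum>a\<in>A. f a))\<^sup>2"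
    by (simp only: norm_of_real power2_abs)
  also have "\<dots> \<le> (\<Sum>a\<in>A. norm (f a))\<^sup>2"
    by (intro power_mono norm_sum norm_ge_zero)
  also have "\<dots> \<le> (\<Sum>a\<in>A. (norm (f a))\<^sup>2) * card A"
    by (rule sum_squared_le_sum_of_squares)
  also have "\<dots> \<le> (\<Sum>x\<in>UNIV. (norm (f x))\<^sup>2) * card A"
    by (intro mult_right_mono sum_mono2) auto
  also have "\<dots> = real (card B) * (real CARD('a) - real (card B)) * card A"
    unfolding f_def by (rule arg_cong[OF sum_norm_chi_sum_squared])
  also have "\<dots> \<le> real (card A * card B) * real CARD('a)"
    by (simp add: algebra_simps)
  finally show ?thesis .
qed

end

lemma cis_2pi_fraction_power_eq_1_iff:
  assumes "0 < n"
  shows "cis (2 * pi * real m / real n) ^ k = 1 \<longleftrightarrow> n dvd m * k"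
proof -
  have "cis (2 * pi * real m / real n) ^ k = cis (of_int (int (m * k)) / of_int (int n) * (2 * pi))"
    by (simp add: DeMoivre field_simps)
  also have "\<dots> = 1 \<longleftrightarrow> (\<exists>t. real_of_int (int (m * k)) = of_int t * of_int (int n))"
    using assms by (simp add: cis_eq_1_iff field_simps)
  also have "\<dots> \<longleftrightarrow> int n dvd int (m * k)"
    unfolding of_int_mult[symmetric] of_int_eq_iff by (auto simp: dvd_def mult.commute)
  finally show ?thesis
    by (metis int_dvd_int_iff of_nat_mult)
qed

locale finite_field_generator =
  fixes g :: "'a::{field,finite}"
  assumes generator_nonzero: "g \<noteq> 0"
    and generates: "x \<noteq> 0 \<Longrightarrow> \<exists>i. x = g ^ i"
begin

lemma card_units_pos: "0 < card (- {0::'a})"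
proof -
  have "- {0::'a} \<noteq> {}"
    using one_neq_zero by blast
  then show ?thesis
    by (simp add: card_gt_0_iff)
qed

lemma power_eq_imp_mod_eq:
  assumes "g ^ i = g ^ j"
  shows "i mod card (- {0::'a}) = j mod card (- {0::'a})"
proof -
  define N where "N = card (- {0::'a})"
  have "0 < N"
    unfolding N_def by (rule card_units_pos)
  have "g ^ N = 1"
    unfolding N_def by (rule power_card_eq_1_if_mult_closed) (use generator_nonzero in auto)
  then have g_mod: "g ^ (k mod N) = g ^ k" for k
    by (rule power_mod_eq_if_power_eq_1)
  have "(\<lambda>k. g ^ k) ` {..<N} = - {0}"
  proof
    show "(\<lambda>k. g ^ k) ` {..<N} \<subseteq> - {0}"
      using generator_nonzero by auto
    show "- {0} \<subseteq> (\<lambda>k. g ^ k) ` {..<N}"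
    proof
      fix x :: 'a
      assume "x \<in> - {0}"
      then obtain k where "x = g ^ k"
        using generates by auto
      then have "x = g ^ (k mod N)"
        by (simp add: g_mod)
      moreover have "k mod N \<in> {..<N}"
        using \<open>0 < N\<close> by simp
      ultimately show "x \<in> (\<lambda>k. g ^ k) ` {..<N}"
        by blast
    qed
  qed
  then have "inj_on (\<lambda>k. g ^ k) {..<N}"
    by (intro eq_card_imp_inj_on) (simp_all add: N_def)
  moreover have "g ^ (i mod N) = g ^ (j mod N)"
    using assms by (simp add: g_mod)
  ultimately show ?thesis
    using \<open>0 < N\<close> unfolding N_def[symmetric] by (auto dest: inj_onD)
qed

definition dlog :: "'a \<Rightarrow> nat" where
  "dlog x = (SOME i. x = g ^ i)"

lemma power_dlog: "x \<noteq> 0 \<Longrightarrow> g ^ dlog x = x"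
  unfolding dlog_def by (metis (mono_tags) generates someI_ex)

(* The character g^i \<mapsto> exp(2\<pi>i m i / N) of the cyclic group F - {0} of order N. *)
definition unit_char :: "nat \<Rightarrow> 'a \<Rightarrow> complex" where
  "unit_char m x = (if x = 0 then 0 else cis (2 * pi * real m / real (card (- {0::'a}))) ^ dlog x)"

lemma unit_char_power: "unit_char m (g ^ i) = cis (2 * pi * real m / real (card (- {0::'a}))) ^ i"
proof -
  define N where "N = card (- {0::'a})"
  define \<zeta> where "\<zeta> = cis (2 * pi * real m / real N)"
  have "\<zeta> ^ N = 1"
    using card_units_pos by (simp add: \<zeta>_def N_def cis_2pi_fraction_power_eq_1_iff)
  moreover have "dlog (g ^ i) mod N = i mod N"
    unfolding N_def using generator_nonzero by (intro power_eq_imp_mod_eq) (simp add: power_dlog)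
  ultimately have "\<zeta> ^ dlog (g ^ i) = \<zeta> ^ i"
    by (metis power_mod_eq_if_power_eq_1)
  then show ?thesis
    using generator_nonzero by (simp add: unit_char_def \<zeta>_def N_def)
qed

lemma unit_char_eq_1:
  assumes "x \<noteq> 0" and "x ^ m = 1"
  shows "unit_char m x = 1"
proof -
  have "g ^ (dlog x * m) = g ^ 0"
    using assms by (simp add: power_mult power_dlog)
  then have "card (- {0::'a}) dvd m * dlog x"
    by (metis power_eq_imp_mod_eq mod_0 mod_0_imp_dvd mult.commute)
  then show ?thesis
    using assms(1) card_units_pos by (simp add: unit_char_def cis_2pi_fraction_power_eq_1_iff)
qed

lemma nontrivial_mult_char_unit_char:
  assumes "\<not> card (- {0::'a}) dvd m"
  shows "nontrivial_mult_char (unit_char m)"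
proof
  show "unit_char m 0 = 0"
    by (simp add: unit_char_def)
  show "norm (unit_char m x) = 1" if "x \<noteq> 0" for x
    using that by (simp add: unit_char_def norm_power)
  show "unit_char m (x * y) = unit_char m x * unit_char m y" for x y
  proof (cases "x = 0 \<or> y = 0")
    case False
    then have "unit_char m (x * y) = unit_char m (g ^ (dlog x + dlog y))"
      by (simp add: power_add power_dlog)
    also have "\<dots> = unit_char m (g ^ dlog x) * unit_char m (g ^ dlog y)"
      unfolding unit_char_power by (rule power_add)
    finally show ?thesis
      using False by (simp add: power_dlog)
  qed (auto simp: unit_char_def)
  have "unit_char m g \<noteq> 1"
    using unit_char_power[of m 1] cis_2pi_fraction_power_eq_1_iff[OF card_units_pos, of m 1] assms
    by simp
  then show "\<exists>x. x \<noteq> 0 \<and> unit_char m x \<noteq> 1"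
    using generator_nonzero by blast
qed

end

lemma finite_field_generator_exists: "\<exists>g::'a::{field,finite}. finite_field_generator g"
proof -
  let ?R = "ring_of_type_algebra :: 'a ring"
  have pow: "x [^]\<^bsub>?R\<^esub> (n::nat) = x ^ n" for x :: 'a and n
    by (induction n) (simp_all add: ring_of_type_algebra_def)
  have carrier: "carrier (Multiplicative_Group.mult_of ?R) = - {0}"
    by (auto simp: Multiplicative_Group.carrier_mult_of ring_of_type_algebra_def)
  have finite_carrier: "finite (carrier ?R)"
    by simp
  have "\<exists>g\<in>- {0::'a}. - {0} = {g ^ i | i::nat. i \<in> UNIV}"
    using field.finite_field_mult_group_has_gen[OF field_from_type_algebra finite_carrier]
    by (simp only: carrier pow)
  then obtain g :: 'a where "g \<in> - {0}" and "- {0} = {g ^ i | i::nat. i \<in> UNIV}" ..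
  then have "finite_field_generator g"
    by unfold_locales (auto simp: set_eq_iff)
  then show ?thesis ..
qed

lemma exists_nontrivial_mult_char_trivial_on:
  fixes \<Gamma> :: "'a::{field,finite} set"
  assumes "mult_subgroup \<Gamma>" and "\<Gamma> \<noteq> - {0}"
  shows "\<exists>\<chi>. nontrivial_mult_char \<chi> \<and> (\<forall>x\<in>\<Gamma>. \<chi> x = 1)"
proof -
  obtain g :: 'a where "finite_field_generator g"
    using finite_field_generator_exists by blast
  then interpret finite_field_generator g .
  have \<Gamma>: "\<Gamma> \<subseteq> - {0}" "1 \<in> \<Gamma>" "\<forall>x\<in>\<Gamma>. \<forall>y\<in>\<Gamma>. x * y \<in> \<Gamma>"
    using assms(1) by (auto simp: mult_subgroup_def)
  have "0 < card \<Gamma>"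
    using \<Gamma>(2) by (auto simp: card_gt_0_iff)
  moreover have "card \<Gamma> < card (- {0::'a})"
    using \<Gamma>(1) assms(2) by (intro psubset_card_mono) auto
  ultimately have "nontrivial_mult_char (unit_char (card \<Gamma>))"
    by (intro nontrivial_mult_char_unit_char) (auto dest: dvd_imp_le)
  moreover have "unit_char (card \<Gamma>) x = 1" if "x \<in> \<Gamma>" for x
    using \<Gamma> that by (intro unit_char_eq_1 power_card_eq_1_if_mult_closed) auto
  ultimately show ?thesis
    by blast
qed

lemma less_4_mult_if_square_le:
  fixes N Z p :: real
  assumes "1 < p" "0 \<le> Z" "Z\<^sup>2 \<le> N" "(N - Z)\<^sup>2 \<le> N * p"
  shows "N < 4 * p"
proof (rule ccontr)
  assume "\<not> N < 4 * p"
  define s where "s = sqrt N"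
  have "0 \<le> N"
    using assms(2,3) by (meson order_trans zero_le_power2)
  then have N: "N = s\<^sup>2"
    by (simp add: s_def)
  have "4 * p \<le> s\<^sup>2"
    using \<open>\<not> N < 4 * p\<close> N by simp
  then have "2 \<le> s"
    unfolding s_def using assms(1) N by (intro real_le_rsqrt) simp
  have "Z \<le> s"
    using assms(3) by (simp add: s_def real_le_rsqrt)
  then have "s * (s - 1) \<le> N - Z"
    by (simp add: N power2_eq_square algebra_simps)
  then have "s\<^sup>2 * (s - 1)\<^sup>2 \<le> s\<^sup>2 * p"
    using assms(4) \<open>2 \<le> s\<close> unfolding N power_mult_distrib[symmetric]
    by (smt (verit) power_mono mult_nonneg_nonneg)
  then have "(s - 1)\<^sup>2 \<le> p"
    using \<open>2 \<le> s\<close> by simp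
  then have "(2 * (s - 1))\<^sup>2 \<le> s\<^sup>2"
    using \<open>4 * p \<le> s\<^sup>2\<close> unfolding power_mult_distrib by simp
  then have "2 * (s - 1) \<le> s"
    by (rule power2_le_imp_le) (use \<open>2 \<le> s\<close> in linarith)
  then have "s = 2"
    using \<open>2 \<le> s\<close> by (simp add: algebra_simps)
  then show False
    using \<open>4 * p \<le> s\<^sup>2\<close> assms(1) by simp
qed

theorem finite_field_sumset_in_subgroup_card_bound:
  fixes \<Gamma> A B :: "'a::{field,finite} set"
  assumes "mult_subgroup \<Gamma>" and "\<Gamma> \<noteq> - {0}"
    and "\<forall>a\<in>A. \<forall>b\<in>B. a + b \<in> \<Gamma> \<union> {0}"
  shows "card A * card B < 4 * CARD('a)"
proof -
  obtain \<chi> where "nontrivial_mult_char \<chi>" and \<chi>_\<Gamma>: "\<forall>x\<in>\<Gamma>. \<chi> x = 1"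
    using exists_nontrivial_mult_char_trivial_on[OF assms(1,2)] by blast
  interpret nontrivial_mult_char \<chi>
    by fact
  define Z where "Z = card {a\<in>A. - a \<in> B}"
  have "Z \<le> card A"
    unfolding Z_def by (intro card_mono) auto
  moreover have "Z \<le> card B"
    unfolding Z_def by (rule card_inj_on_le[of uminus]) auto
  ultimately have "real Z ^ 2 \<le> real (card A * card B)"
    by (simp add: power2_eq_square mult_mono flip: of_nat_mult)
  moreover have "(real (card A * card B) - real Z)\<^sup>2 \<le> real (card A * card B) * real CARD('a)"
    unfolding Z_def using assms(3) \<chi>_\<Gamma> by (intro sumset_in_kernel_card_bound) auto
  moreover have "2 \<le> CARD('a)"
    using card_mono[of UNIV "{0, 1::'a}"] by simp
  ultimately have "real (card A * card B) < real (4 * CARD('a))"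
    using less_4_mult_if_square_le[of "real CARD('a)" "real Z" "real (card A * card B)"] by simp
  then show ?thesis
    by (simp only: of_nat_less_iff)
qed

hide_const (open) Divisibility.prime

theorem lemma5:
  fixes \<Gamma> A B :: "'a::{field,finite} set"
  assumes "prime CARD('a)"
    and "mult_subgroup \<Gamma>"
    and "\<Gamma> \<noteq> - {0}"
    and "\<forall>a\<in>A. \<forall>b\<in>B. a + b \<in> \<Gamma> \<union> {0}"
  shows "card A * card B < 4 * CARD('a)"
  using assms(2-4) by (rule finite_field_sumset_in_subgroup_card_bound)

end
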